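(* Let $F$ be a Sturmian set on an alphabet $A$ with $k$ letters. For any finite $F$-maximal bifix code $X\subset F$, one has $\mathrm{Card}(X)=(k-1)\,d_F(X)+1$.
   Context: For a set $F$ of words and a word $u\in F$, $u$ is right-special if $ua\in F$ for at least two letters $a$. An infinite word $x$ over $A$ is episturmian if its set of factors $F(x)$ is closed under reversal and contains, for each $n\ge1$, at most one right-special word of length $n$; it is strict episturmian if moreover it has exactly one right-special factor of each length and every right-special factor $u$ satisfies $ua\in F(x)$ for all $a\in A$. A Sturmian set is the set of factors of a strict episturmian word. A bifix code is a set of nonempty words none of which is a proper prefix or proper suffix of another; $X\subset F$ is $F$-maximal bifix if not properly contained in a bifix code contained in $F$. A parse of $w$ with respect to $X$ is a triple $(v,x,u)$ with $w=vxu$, $v$ having no suffix in $X$, $x\in X^*$, $u$ having no prefix in $X$; $\delta_X(w)$ is the number of parses, and $d_F(X)=\max_{w\in F}\delta_X(w)$. *)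

theory Defs
  imports Main "HOL-Library.Sublist" "HOL-Library.Extended_Nat"
begin

definition factors :: "(nat \<Rightarrow> 'a) \<Rightarrow> 'a list set" where
  "factors x = {w. \<exists>i n. w = map x [i..<i+n]}"

definition right_special :: "'a list set \<Rightarrow> 'a list \<Rightarrow> bool" where
  "right_special F u \<longleftrightarrow> u \<in> F \<and> (\<exists>a b. a \<noteq> b \<and> u @ [a] \<in> F \<and> u @ [b] \<in> F)"

definition episturmian :: "(nat \<Rightarrow> 'a) \<Rightarrow> bool" where
  "episturmian x \<longleftrightarrow>
     (\<forall>w \<in> factors x. rev w \<in> factors x) \<and>
     (\<forall>n \<ge> 1. \<forall>u v. length u = n \<and> length v = n \<and>
        right_special (factors x) u \<and> right_special (factors x) v \<longrightarrow> u = v)"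

definition strict_episturmian :: "'a set \<Rightarrow> (nat \<Rightarrow> 'a) \<Rightarrow> bool" where
  "strict_episturmian A x \<longleftrightarrow>
     (\<forall>i. x i \<in> A) \<and> episturmian x \<and>
     (\<forall>n \<ge> 1. \<exists>u. length u = n \<and> right_special (factors x) u) \<and>
     (\<forall>u. right_special (factors x) u \<longrightarrow> (\<forall>a \<in> A. u @ [a] \<in> factors x))"

definition sturmian_set :: "'a set \<Rightarrow> 'a list set \<Rightarrow> bool" where
  "sturmian_set A F \<longleftrightarrow> (\<exists>x. strict_episturmian A x \<and> F = factors x)"

definition bifix_code :: "'a list set \<Rightarrow> bool" where
  "bifix_code X \<longleftrightarrow> [] \<notin> X \<and>
     (\<forall>x \<in> X. \<forall>y \<in> X. \<not> strict_prefix x y \<and> \<not> strict_suffix x y)"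

definition F_maximal_bifix :: "'a list set \<Rightarrow> 'a list set \<Rightarrow> bool" where
  "F_maximal_bifix F X \<longleftrightarrow> bifix_code X \<and> X \<subseteq> F \<and>
     (\<forall>Y. bifix_code Y \<and> Y \<subseteq> F \<and> X \<subseteq> Y \<longrightarrow> Y = X)"

definition parses :: "'a list set \<Rightarrow> 'a list \<Rightarrow> ('a list \<times> 'a list \<times> 'a list) set" where
  "parses X w = {(v, y, u). w = v @ y @ u \<and> \<not> (\<exists>s \<in> X. suffix s v) \<and>
      y \<in> concat ` lists X \<and> \<not> (\<exists>p \<in> X. prefix p u)}"

definition delta :: "'a list set \<Rightarrow> 'a list \<Rightarrow> nat" where
  "delta X w = card (parses X w)"

definition degree :: "'a list set \<Rightarrow> 'a list set \<Rightarrow> enat" where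
  "degree F X = (SUP w \<in> F. enat (delta X w))"

end

theory Submission
  imports Defs
begin

(* For a suffix code X a parse of w is determined by its last component,
       so delta X w counts the suffixes of w having no prefix in X; dually, for a prefix
       code it counts the prefixes of w having no suffix in X.  Both are related by
       reversal, which also leaves the degree unchanged when rev ` F = F.
   (2) Completeness.  In a set F in which any two words are a prefix and a suffix of a
       common word of F, an F-maximal bifix code is prefix-complete or suffix-complete
       (every word of F is comparable with a code word for the prefix, resp. suffix,
       order); by reversal the second case reduces to the first.
   (3) Sturmian facts.  Closure under reversal makes x recurrent, which gives the
       hypothesis of (2) and shows that every factor extends to a right-special one.
   (4) Counting.  For prefix-complete X, the proper prefixes P of code words form a
       tree with leaves X in which a node has k children if it is right special and one
       child otherwise; so card X = 1 + (k - 1) * card (P \<inter> R), R the right-special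
       factors.  By (1), delta X w counts the suffixes of w lying in P, which is at most
       card (P \<inter> R) and equal to it for long right-special w; so d_F(X) = card (P \<inter> R). *)

section \<open>Occurrences of words in an infinite word\<close>

definition occ :: "(nat \<Rightarrow> 'a) \<Rightarrow> 'a list \<Rightarrow> nat \<Rightarrow> bool" where
  "occ x w i \<longleftrightarrow> map x [i..<i + length w] = w"

lemma factors_iff: "w \<in> factors x \<longleftrightarrow> (\<exists>i. occ x w i)"
proof
  assume "w \<in> factors x"
  then obtain i n where "w = map x [i..<i + n]" unfolding factors_def by blast
  then show "\<exists>i. occ x w i" unfolding occ_def by auto
next
  assume "\<exists>i. occ x w i"
  then obtain i where "w = map x [i..<i + length w]" unfolding occ_def by metis
  then show "w \<in> factors x" unfolding factors_def by blast
qed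

lemma occ_nth: "occ x w i \<longleftrightarrow> (\<forall>s<length w. x (i + s) = w ! s)"
  unfolding occ_def list_eq_iff_nth_eq by auto

lemma map_segment_split: "i \<le> j \<Longrightarrow> j \<le> k \<Longrightarrow> map x [i..<k] = map x [i..<j] @ map x [j..<k]"
  using upt_add_eq_append[of i j "k - j"] by simp

lemma occ_append: "occ x (u @ v) i \<longleftrightarrow> occ x u i \<and> occ x v (i + length u)"
proof -
  have "map x [i..<i + length (u @ v)] =
        map x [i..<i + length u] @ map x [i + length u..<i + length u + length v]"
    using map_segment_split[of i "i + length u" "i + length u + length v" x] by (simp add: add.assoc)
  moreover have "length (map x [i..<i + length u]) = length u" by simp
  ultimately show ?thesis
    unfolding occ_def by (metis append_eq_append_conv)
qed

lemma occ_snoc: "occ x (w @ [a]) i \<longleftrightarrow> occ x w i \<and> x (i + length w) = a"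
  by (simp add: occ_append) (simp add: occ_nth)

lemma occ_segment: "i \<le> j \<Longrightarrow> occ x (map x [i..<j]) i"
  unfolding occ_def by simp

lemma occ_next_letter: "occ x w i \<Longrightarrow> w @ [x (i + length w)] \<in> factors x"
  unfolding factors_iff by (auto simp: occ_snoc)

lemma factors_append: "u @ v \<in> factors x \<Longrightarrow> u \<in> factors x \<and> v \<in> factors x"
  unfolding factors_iff using occ_append by blast

lemma factors_prefix: "prefix u w \<Longrightarrow> w \<in> factors x \<Longrightarrow> u \<in> factors x"
  by (auto simp: prefix_def dest: factors_append)

lemma factors_suffix: "suffix u w \<Longrightarrow> w \<in> factors x \<Longrightarrow> u \<in> factors x"
  by (auto simp: suffix_def dest: factors_append)

lemma factors_extend: "w \<in> factors x \<Longrightarrow> \<exists>a. w @ [a] \<in> factors x"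
  using occ_next_letter factors_iff by blast

lemma Nil_factor: "[] \<in> factors x"
  unfolding factors_iff occ_def by simp

lemma not_right_special_unique_ext:
  "u \<in> F \<Longrightarrow> \<not> right_special F u \<Longrightarrow> u @ [a] \<in> F \<Longrightarrow> u @ [b] \<in> F \<Longrightarrow> a = b"
  unfolding right_special_def by metis


section \<open>Parses with respect to prefix and suffix codes\<close>

definition code_star :: "'a list set \<Rightarrow> 'a list set" where
  "code_star X = concat ` lists X"

definition no_suffix_in :: "'a list set \<Rightarrow> 'a list \<Rightarrow> bool" where
  "no_suffix_in X v \<longleftrightarrow> \<not> (\<exists>s\<in>X. suffix s v)"

definition no_prefix_in :: "'a list set \<Rightarrow> 'a list \<Rightarrow> bool" where
  "no_prefix_in X u \<longleftrightarrow> \<not> (\<exists>p\<in>X. prefix p u)"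

lemma parses_alt:
  "parses X w = {(v, y, u). w = v @ y @ u \<and> no_suffix_in X v \<and> y \<in> code_star X \<and> no_prefix_in X u}"
  unfolding parses_def code_star_def no_suffix_in_def no_prefix_in_def by simp

lemma code_star_Nil: "[] \<in> code_star X"
  unfolding code_star_def by (rule image_eqI[of _ _ "[]"]) auto

lemma code_star_snoc: "y \<in> code_star X \<Longrightarrow> z \<in> X \<Longrightarrow> y @ z \<in> code_star X"
  unfolding code_star_def by (auto intro!: image_eqI[where x = "_ @ [z]"])

lemma code_star_cases:
  assumes "y \<in> code_star X"
  obtains "y = []" | y' z where "y = y' @ z" "y' \<in> code_star X" "z \<in> X"
proof -
  obtain l where l: "y = concat l" "l \<in> lists X" using assms unfolding code_star_def by blast
  show thesis
  proof (cases l rule: rev_cases)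
    case Nil then show ?thesis using l that(1) by simp
  next
    case (snoc l' z)
    then show ?thesis using l that(2)[of "concat l'" z] unfolding code_star_def by auto
  qed
qed

lemma code_star_rev: "y \<in> code_star X \<Longrightarrow> rev y \<in> code_star (rev ` X)"
  unfolding code_star_def
  by (auto simp: rev_concat rev_map intro!: image_eqI[where x = "rev (map rev _)"])

lemma no_suffix_in_rev: "no_suffix_in (rev ` X) (rev u) \<longleftrightarrow> no_prefix_in X u"
  unfolding no_suffix_in_def no_prefix_in_def by (auto simp: suffix_to_prefix)

lemma no_prefix_in_rev: "no_prefix_in (rev ` X) (rev v) \<longleftrightarrow> no_suffix_in X v"
  unfolding no_suffix_in_def no_prefix_in_def by (auto simp: suffix_to_prefix)

text \<open>Every word factors as v y with y in X* and v without suffix in X; when X is a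
  suffix code this factorisation is unique (peel off code words from the right).\<close>

lemma star_factorisation_exists:
  assumes "[] \<notin> X"
  shows "\<exists>v y. z = v @ y \<and> no_suffix_in X v \<and> y \<in> code_star X"
proof (induction "length z" arbitrary: z rule: less_induct)
  case less
  show ?case
  proof (cases "no_suffix_in X z")
    case True then show ?thesis using code_star_Nil by (intro exI[of _ z] exI[of _ "[]"]) simp
  next
    case False
    then obtain s z' where s: "s \<in> X" "z = z' @ s" unfolding no_suffix_in_def suffix_def by blast
    with assms have "length z' < length z" by (cases s) auto
    then obtain v y where "z' = v @ y" "no_suffix_in X v" "y \<in> code_star X" using less by blast
    then show ?thesis using s code_star_snoc by (intro exI[of _ v] exI[of _ "y @ s"]) simp
  qed
qed

lemma star_factorisation_unique:
  assumes ne: "[] \<notin> X" and suffix_code: "\<forall>x\<in>X. \<forall>y\<in>X. \<not> strict_suffix x y"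
  shows "v1 @ y1 = v2 @ y2 \<Longrightarrow> no_suffix_in X v1 \<Longrightarrow> no_suffix_in X v2 \<Longrightarrow>
         y1 \<in> code_star X \<Longrightarrow> y2 \<in> code_star X \<Longrightarrow> v1 = v2 \<and> y1 = y2"
proof (induction "length (v1 @ y1)" arbitrary: v1 v2 y1 y2 rule: less_induct)
  case less
  note eq = less.prems(1) and nv1 = less.prems(2) and nv2 = less.prems(3)
  show ?case
  proof (cases rule: code_star_cases[OF less.prems(4)])
    case 1
    show ?thesis
    proof (cases rule: code_star_cases[OF less.prems(5)])
      case (2 y2' z2)
      then have "suffix z2 v1" using eq 1 unfolding suffix_def by (metis append_Nil2 append_assoc)
      then show ?thesis using nv1 2 unfolding no_suffix_in_def by blast
    qed (use eq 1 in simp)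
  next
    case (2 y1' z1)
    show ?thesis
    proof (cases rule: code_star_cases[OF less.prems(5)])
      case 1
      then have "suffix z1 v2" using eq 2 unfolding suffix_def by (metis append_Nil2 append_assoc)
      then show ?thesis using nv2 2 unfolding no_suffix_in_def by blast
    next
      case (2 y2' z2)
      note y1 = \<open>y1 = y1' @ z1\<close> \<open>y1' \<in> code_star X\<close> \<open>z1 \<in> X\<close>
      have "suffix z1 (v1 @ y1)" "suffix z2 (v1 @ y1)"
        using eq y1 2 unfolding suffix_def by (metis append_assoc)+
      then have "suffix z1 z2 \<or> suffix z2 z1" by (rule suffix_same_cases)
      then have "z1 = z2" using suffix_code y1(3) 2(3) unfolding strict_suffix_def by metis
      then have eq': "v1 @ y1' = v2 @ y2'" using eq y1 2 by simp
      have "z1 \<noteq> []" using ne y1(3) by metis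
      then have "length (v1 @ y1') < length (v1 @ y1)" using y1 by simp
      then show ?thesis using less.hyps[OF _ eq' nv1 nv2 y1(2) 2(2)] y1 2 \<open>z1 = z2\<close> by simp
    qed
  qed
qed

text \<open>For a suffix code, a parse is determined by its last component.\<close>

lemma card_parses_suffix_code:
  assumes ne: "[] \<notin> X" and suffix_code: "\<forall>x\<in>X. \<forall>y\<in>X. \<not> strict_suffix x y"
  shows "card (parses X w) = card {u. suffix u w \<and> no_prefix_in X u}"
proof (rule bij_betw_same_card)
  let ?last = "\<lambda>(v :: 'a list, y :: 'a list, u :: 'a list). u"
  show "bij_betw ?last (parses X w) {u. suffix u w \<and> no_prefix_in X u}"
    unfolding bij_betw_def
  proof
    show "inj_on ?last (parses X w)"
      by (rule inj_onI) (auto simp: parses_alt dest: star_factorisation_unique[OF ne suffix_code])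
    show "?last ` parses X w = {u. suffix u w \<and> no_prefix_in X u}"
    proof (intro set_eqI iffI)
      fix u assume "u \<in> ?last ` parses X w"
      then show "u \<in> {u. suffix u w \<and> no_prefix_in X u}"
        by (auto simp: parses_alt suffix_def)
    next
      fix u assume "u \<in> {u. suffix u w \<and> no_prefix_in X u}"
      then obtain z where u: "w = z @ u" "no_prefix_in X u" by (auto simp: suffix_def)
      obtain v y where "z = v @ y" "no_suffix_in X v" "y \<in> code_star X"
        using star_factorisation_exists[OF ne] by blast
      then have "(v, y, u) \<in> parses X w" using u by (simp add: parses_alt)
      then show "u \<in> ?last ` parses X w" by force
    qed
  qed
qed

definition rev_parse :: "'a list \<times> 'a list \<times> 'a list \<Rightarrow> 'a list \<times> 'a list \<times> 'a list" where
  "rev_parse = (\<lambda>(v, y, u). (rev u, rev y, rev v))"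

lemma rev_parse_rev_parse [simp]: "rev_parse (rev_parse t) = t"
  unfolding rev_parse_def by (cases t) auto

lemma rev_parse_in: "t \<in> parses X w \<Longrightarrow> rev_parse t \<in> parses (rev ` X) (rev w)"
  by (auto simp: parses_alt rev_parse_def no_suffix_in_rev no_prefix_in_rev code_star_rev)

lemma card_parses_rev: "card (parses (rev ` X) (rev w)) = card (parses X w)"
proof -
  have "rev_parse ` parses X w = parses (rev ` X) (rev w)"
  proof (intro equalityI subsetI)
    fix t assume "t \<in> parses (rev ` X) (rev w)"
    then have "rev_parse t \<in> parses X w"
      using rev_parse_in[of t "rev ` X" "rev w"] by (simp add: image_image)
    then show "t \<in> rev_parse ` parses X w" by (metis image_eqI rev_parse_rev_parse)
  qed (auto intro: rev_parse_in)
  moreover have "inj_on rev_parse (parses X w)" by (metis inj_onI rev_parse_rev_parse)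
  ultimately show ?thesis by (metis card_image)
qed

text \<open>Dually, for a prefix code a parse is determined by its first component.\<close>

lemma card_parses_prefix_code:
  assumes ne: "[] \<notin> X" and prefix_code: "\<forall>x\<in>X. \<forall>y\<in>X. \<not> strict_prefix x y"
  shows "card (parses X w) = card {v. prefix v w \<and> no_suffix_in X v}"
proof -
  have "[] \<notin> rev ` X" using ne by auto
  moreover have "\<forall>x\<in>rev ` X. \<forall>y\<in>rev ` X. \<not> strict_suffix x y"
    using prefix_code by (auto simp: strict_suffix_to_prefix)
  ultimately have "card (parses X w) = card {u. suffix u (rev w) \<and> no_prefix_in (rev ` X) u}"
    using card_parses_suffix_code card_parses_rev by metis
  also have "{u. suffix u (rev w) \<and> no_prefix_in (rev ` X) u} = rev ` {v. prefix v w \<and> no_suffix_in X v}"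
  proof (intro equalityI subsetI)
    fix u assume "u \<in> {u. suffix u (rev w) \<and> no_prefix_in (rev ` X) u}"
    then have "prefix (rev u) w" "no_suffix_in X (rev u)"
      using no_prefix_in_rev[of X "rev u"] by (auto simp: suffix_to_prefix)
    then show "u \<in> rev ` {v. prefix v w \<and> no_suffix_in X v}" by (auto intro!: image_eqI[of _ _ "rev u"])
  qed (auto simp: suffix_to_prefix no_prefix_in_rev)
  also have "card \<dots> = card {v. prefix v w \<and> no_suffix_in X v}"
    by (rule card_image) (simp add: inj_on_def)
  finally show ?thesis .
qed

lemma bifix_code_rev: "bifix_code X \<Longrightarrow> bifix_code (rev ` X)"
  unfolding bifix_code_def by (auto simp: strict_suffix_to_prefix)

lemma degree_rev:
  assumes "rev ` F = F"
  shows "degree F (rev ` X) = degree F X"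
proof -
  have "delta (rev ` X) w = delta X (rev w)" for w
    using card_parses_rev[of X "rev w"] by (simp add: delta_def)
  then have "degree F (rev ` X) = (SUP w\<in>F. enat (delta X (rev w)))"
    unfolding degree_def by simp
  also have "\<dots> = (SUP w\<in>rev ` F. enat (delta X w))" by (simp add: image_comp)
  also have "\<dots> = degree F X" unfolding degree_def assms ..
  finally show ?thesis .
qed


section \<open>Maximal bifix codes are prefix- or suffix-complete\<close>

definition prefix_complete :: "'a list set \<Rightarrow> 'a list set \<Rightarrow> bool" where
  "prefix_complete F X \<longleftrightarrow> (\<forall>w\<in>F. (\<exists>y\<in>X. prefix y w) \<or> (\<exists>y\<in>X. prefix w y))"

definition suffix_complete :: "'a list set \<Rightarrow> 'a list set \<Rightarrow> bool" where
  "suffix_complete F X \<longleftrightarrow> (\<forall>w\<in>F. (\<exists>y\<in>X. suffix y w) \<or> (\<exists>y\<in>X. suffix w y))"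

lemma F_maximal_bifix_nonempty:
  assumes "F_maximal_bifix F X" and "[a] \<in> F"
  shows "X \<noteq> {}"
proof
  assume "X = {}"
  moreover have "bifix_code {[a]}" unfolding bifix_code_def by simp
  ultimately have "{[a]} = X" using assms unfolding F_maximal_bifix_def by blast
  with \<open>X = {}\<close> show False by simp
qed

text \<open>If w1 is prefix-incomparable and w2 suffix-incomparable with all code words, then a
  word y of F starting with w1 and ending with w2 could be added to X, so by maximality
  y \<in> X, contradicting the choice of w1.\<close>

lemma F_maximal_bifix_complete:
  assumes max: "F_maximal_bifix F X" and ne: "X \<noteq> {}"
    and join: "\<And>u v. u \<in> F \<Longrightarrow> v \<in> F \<Longrightarrow> \<exists>y\<in>F. prefix u y \<and> suffix v y"
  shows "prefix_complete F X \<or> suffix_complete F X"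
proof (rule ccontr)
  assume "\<not> ?thesis"
  then obtain w1 w2 where
    w1: "w1 \<in> F" "\<not> (\<exists>y\<in>X. prefix y w1)" "\<not> (\<exists>y\<in>X. prefix w1 y)" and
    w2: "w2 \<in> F" "\<not> (\<exists>y\<in>X. suffix y w2)" "\<not> (\<exists>y\<in>X. suffix w2 y)"
    unfolding prefix_complete_def suffix_complete_def by blast
  obtain y where y: "y \<in> F" "prefix w1 y" "suffix w2 y" using join[OF w1(1) w2(1)] by blast
  obtain z0 where "z0 \<in> X" using ne by blast
  then have "y \<noteq> []" using y(2) w1(3) by (metis Nil_prefix prefix_Nil)
  moreover have "\<not> strict_prefix y z" if "z \<in> X" for z
    using that w1(3) y(2) by (meson prefix_order.order_trans strict_prefix_def)
  moreover have "\<not> strict_prefix z y" if "z \<in> X" for z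
  proof
    assume "strict_prefix z y"
    then have "prefix z w1 \<or> prefix w1 z" using y(2) prefix_same_cases by (auto simp: strict_prefix_def)
    then show False using that w1(2,3) by blast
  qed
  moreover have "\<not> strict_suffix y z" if "z \<in> X" for z
    using that w2(3) y(3) by (meson suffix_order.order_trans strict_suffix_def)
  moreover have "\<not> strict_suffix z y" if "z \<in> X" for z
  proof
    assume "strict_suffix z y"
    then have "suffix z w2 \<or> suffix w2 z" using y(3) suffix_same_cases by (auto simp: strict_suffix_def)
    then show False using that w2(2,3) by blast
  qed
  ultimately have "bifix_code (insert y X)"
    using max unfolding F_maximal_bifix_def bifix_code_def by auto
  then have "insert y X = X" using max y(1) unfolding F_maximal_bifix_def by blast
  then show False using w1(3) y(2) by blast
qed

lemma suffix_complete_rev: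
  assumes complete: "suffix_complete F X" and rev_F: "rev ` F = F"
  shows "prefix_complete F (rev ` X)"
  unfolding prefix_complete_def
proof
  fix w assume "w \<in> F"
  then have "rev w \<in> F" using rev_F by blast
  then have "(\<exists>y\<in>X. suffix y (rev w)) \<or> (\<exists>y\<in>X. suffix (rev w) y)"
    using complete unfolding suffix_complete_def by blast
  then have "(\<exists>y\<in>X. prefix (rev y) w) \<or> (\<exists>y\<in>X. prefix w (rev y))"
    by (simp add: suffix_to_prefix)
  then show "(\<exists>y\<in>rev ` X. prefix y w) \<or> (\<exists>y\<in>rev ` X. prefix w y)" by blast
qed


section \<open>Strict episturmian words\<close>

locale strict_episturmian_word =
  fixes A :: "'a set" and x :: "nat \<Rightarrow> 'a"
  assumes strict: "strict_episturmian A x"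
begin

abbreviation "F \<equiv> factors x"

lemma letters: "x i \<in> A"
  using strict unfolding strict_episturmian_def by blast

lemma rev_closed: "w \<in> F \<Longrightarrow> rev w \<in> F"
  using strict unfolding strict_episturmian_def episturmian_def by blast

lemma rev_image: "rev ` F = F"
proof (intro equalityI subsetI)
  fix w assume "w \<in> F"
  then have "rev w \<in> F" by (rule rev_closed)
  then show "w \<in> rev ` F" by (rule image_eqI[rotated]) simp
qed (auto intro: rev_closed)

lemma ext_letter: "u @ [a] \<in> F \<Longrightarrow> a \<in> A"
  unfolding factors_iff using letters by (auto simp: occ_snoc)

lemma right_special_ext: "right_special F u \<Longrightarrow> a \<in> A \<Longrightarrow> u @ [a] \<in> F"
  using strict unfolding strict_episturmian_def by blast

lemma right_special_unique:
  assumes u: "right_special F u" and v: "right_special F v" and len: "length u = length v"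
  shows "u = v"
proof (cases "u = []")
  case False
  then have "1 \<le> length u" by (cases u) auto
  moreover have "episturmian x" using strict unfolding strict_episturmian_def by blast
  then have "\<forall>n\<ge>1. \<forall>u v. length u = n \<and> length v = n \<and>
      right_special F u \<and> right_special F v \<longrightarrow> u = v"
    unfolding episturmian_def by (elim conjE)
  ultimately show ?thesis using u v len by (metis (no_types))
qed (use len in simp)

lemma right_special_suffix:
  assumes rs: "right_special F w" and su: "suffix u w"
  shows "right_special F u"
proof -
  obtain a b where ab: "a \<noteq> b" "w @ [a] \<in> F" "w @ [b] \<in> F" and "w \<in> F"
    using rs unfolding right_special_def by blast
  have "suffix (u @ [c]) (w @ [c])" for c using su by (auto simp: suffix_def)
  then have "u @ [a] \<in> F" "u @ [b] \<in> F" using ab factors_suffix by blast+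
  moreover have "u \<in> F" using \<open>w \<in> F\<close> su factors_suffix by blast
  ultimately show ?thesis using ab(1) unfolding right_special_def by blast
qed

lemma right_special_exists: "\<exists>u. length u = n \<and> right_special F u"
proof -
  have "\<exists>u. length u = max n 1 \<and> right_special F u"
    using strict unfolding strict_episturmian_def by simp
  then obtain u where u: "length u = max n 1" "right_special F u" by blast
  have "right_special F (drop (max n 1 - n) u)"
    using right_special_suffix[OF u(2)] suffix_drop by blast
  moreover have "length (drop (max n 1 - n) u) = n" using u(1) by simp
  ultimately show ?thesis by blast
qed

text \<open>Closure under reversal: the reversal of the prefix q of length m occurs, so some
  prefix v of x ends with rev q; then rev v, which begins with q, occurs as well.  If w
  occurs for the last time at i (inside q), this occurrence of rev v must be at position 0,
  i.e. v is a palindromic prefix of x of length at least m.\<close>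

lemma palindromic_prefix:
  assumes occ: "occ x w i" and last: "\<forall>j>i. \<not> occ x w j" and m: "m \<ge> i + length w"
  shows "\<exists>L\<ge>m. \<forall>t<L. x t = x (L - 1 - t)"
proof -
  define q where "q = map x [0..<m]"
  have "rev q \<in> F" using rev_closed occ_segment[of 0 m x] unfolding factors_iff q_def by blast
  then obtain j where j: "map x [j..<j + m] = rev q" by (auto simp: factors_iff occ_def q_def)
  define v where "v = map x [0..<j + m]"
  have v: "v = map x [0..<j] @ rev q"
    unfolding v_def using j map_segment_split[of 0 j "j + m" x] by simp
  have "rev v \<in> F" using rev_closed occ_segment[of 0 "j + m" x] unfolding factors_iff v_def by blast
  then obtain j' where j': "occ x (rev v) j'" by (auto simp: factors_iff)
  then have "occ x q j'" using v by (simp add: occ_append)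
  then have shift: "x (j' + s) = x s" if "s < m" for s using that unfolding occ_nth q_def by simp
  have "j' = 0"
  proof (rule ccontr)
    assume "j' \<noteq> 0"
    have "occ x w (j' + i)" unfolding occ_nth
    proof (intro allI impI)
      fix s assume s: "s < length w"
      then have "x (j' + (i + s)) = x (i + s)" using shift m by simp
      then show "x (j' + i + s) = w ! s" using occ s unfolding occ_nth by (simp add: add.assoc)
    qed
    then show False using last \<open>j' \<noteq> 0\<close> by auto
  qed
  then have "occ x (rev v) 0" using j' by simp
  then have prefix_rev_v: "x t = rev v ! t" if "t < length v" for t
    using that unfolding occ_nth by simp
  have len_v: "length v = j + m" by (simp add: v_def)
  have "x t = x (j + m - 1 - t)" if "t < j + m" for t
  proof -
    have "x t = rev v ! t" using prefix_rev_v that len_v by simp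
    also have "\<dots> = v ! (j + m - 1 - t)" using that len_v by (simp add: rev_nth)
    also have "\<dots> = x (j + m - 1 - t)" using that by (simp add: v_def)
    finally show ?thesis .
  qed
  moreover have "j + m \<ge> m" by simp
  ultimately show ?thesis by blast
qed

text \<open>Hence every factor occurs infinitely often: if w occurred for the last time at i,
  two palindromic prefixes of lengths L1 < L2 would reflect this occurrence to
  position L2 - L1 + i.\<close>

lemma occurs_again:
  assumes occ: "occ x w i"
  shows "\<exists>j>i. occ x w j"
proof (rule ccontr)
  assume "\<not> (\<exists>j>i. occ x w j)"
  then have last: "\<forall>j>i. \<not> occ x w j" by blast
  obtain L1 where L1: "L1 \<ge> i + length w" "\<forall>t<L1. x t = x (L1 - 1 - t)"
    using palindromic_prefix[OF occ last order_refl] by blast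
  have "L1 + 1 \<ge> i + length w" using L1(1) by simp
  then obtain L2 where L2: "L2 \<ge> L1 + 1" "\<forall>t<L2. x t = x (L2 - 1 - t)"
    using palindromic_prefix[OF occ last] by blast
  have reflect: "x (L2 - L1 + t) = x t" if "t < L1" for t
  proof -
    have "x (L2 - L1 + t) = x (L2 - 1 - (L2 - L1 + t))"
      using L2(1) that L2(2)[rule_format, of "L2 - L1 + t"] by simp
    also have "L2 - 1 - (L2 - L1 + t) = L1 - 1 - t" using L2(1) that by simp
    finally show ?thesis using that L1(2)[rule_format, of t] by simp
  qed
  have "occ x w (L2 - L1 + i)" unfolding occ_nth
  proof (intro allI impI)
    fix s assume s: "s < length w"
    then have "x (L2 - L1 + (i + s)) = x (i + s)" using reflect L1(1) by simp
    then show "x (L2 - L1 + i + s) = w ! s" using occ s unfolding occ_nth by (simp add: add.assoc)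
  qed
  moreover have "L2 - L1 + i > i" using L2 by simp
  ultimately show False using last by blast
qed

lemma recurrent: "w \<in> F \<Longrightarrow> \<exists>j\<ge>N. occ x w j"
proof (induction N)
  case 0 then show ?case by (auto simp: factors_iff)
next
  case (Suc N)
  then obtain j where j: "j \<ge> N" "occ x w j" by blast
  then obtain j' where "j' > j" "occ x w j'" using occurs_again by blast
  then show ?case using j(1) by (intro exI[of _ j']) simp
qed

lemma factor_join:
  assumes u: "u \<in> F" and v: "v \<in> F"
  shows "\<exists>y\<in>F. prefix u y \<and> suffix v y"
proof -
  obtain i where i: "occ x u i" using u by (auto simp: factors_iff)
  obtain j where j: "j \<ge> i + length u" "occ x v j" using recurrent[OF v] by blast
  define y where "y = map x [i..<j + length v]"
  have "y \<in> F" unfolding y_def factors_iff using j occ_segment[of i "j + length v" x] by auto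
  moreover have "y = u @ map x [i + length u..<j + length v]"
    using i j map_segment_split[of i "i + length u" "j + length v" x] unfolding y_def occ_def by simp
  moreover have "y = map x [i..<j] @ v"
    using j map_segment_split[of i j "j + length v" x] unfolding y_def occ_def by simp
  ultimately show ?thesis by (metis prefixI suffixI)
qed

text \<open>Otherwise, starting
  from two occurrences i < j of w, the letters following both occurrences always agree,
  so x is eventually periodic with period p = j - i; but then a right-special factor of
  length p, occurring late enough, would be followed by a unique letter.\<close>

lemma right_special_extension:
  assumes wF: "w \<in> F"
  shows "\<exists>t. right_special F (w @ t)"
proof (rule ccontr)
  assume none: "\<not> (\<exists>t. right_special F (w @ t))"
  obtain i where i: "occ x w i" using wF factors_iff by blast
  obtain j where j: "j \<ge> Suc i" "occ x w j" using recurrent[OF wF] by blast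
  define M where "M = i + length w"
  have follows: "occ x (map x [i..<M + n]) j" for n
  proof (induction n)
    case 0 then show ?case using i j unfolding occ_def M_def by simp
  next
    case (Suc n)
    define u where "u = map x [i..<M + n]"
    have "u = w @ map x [M..<M + n]"
      using i map_segment_split[of i M "M + n" x] unfolding u_def M_def occ_def by simp
    then have "\<not> right_special F u" using none by blast
    moreover have "occ x u i" unfolding u_def M_def by (simp add: occ_segment)
    moreover have "occ x u j" using Suc.IH unfolding u_def .
    ultimately have "x (i + length u) = x (j + length u)"
      using not_right_special_unique_ext[OF _ _ occ_next_letter occ_next_letter] factors_iff by blast
    moreover have "map x [i..<M + Suc n] = u @ [x (i + length u)]"
      unfolding u_def M_def by (simp add: add.assoc)
    ultimately show ?case using \<open>occ x u j\<close> by (simp add: occ_snoc)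
  qed
  define p where "p = j - i"
  have p_pos: "p > 0" using j(1) unfolding p_def by simp
  have period: "x (m + p) = x m" if "m \<ge> M" for m
  proof -
    have "m - i < length (map x [i..<M + Suc (m - M)])" using that by (simp add: M_def)
    then have "x (j + (m - i)) = map x [i..<M + Suc (m - M)] ! (m - i)"
      using follows[of "Suc (m - M)"] unfolding occ_nth by blast
    also have "\<dots> = x m" using that by (simp add: M_def del: upt_Suc)
    finally have "x (j + (m - i)) = x m" .
    moreover have "j + (m - i) = m + p" using that j(1) unfolding p_def M_def by simp
    ultimately show ?thesis by simp
  qed
  obtain u where u: "length u = p" "right_special F u" using right_special_exists by blast
  then obtain a b where ab: "a \<noteq> b" "u @ [a] \<in> F" "u @ [b] \<in> F"
    unfolding right_special_def by blast
  have late: "c = u ! 0" if uc: "u @ [c] \<in> F" for c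
  proof -
    obtain k where k: "k \<ge> M" "occ x (u @ [c]) k" using recurrent[OF uc] by blast
    then have "occ x u k" "x (k + p) = c" using u(1) by (simp_all add: occ_snoc)
    then have "x k = u ! 0" "x (k + p) = c" using p_pos u(1) unfolding occ_nth by auto
    then show ?thesis using period[OF k(1)] by simp
  qed
  show False using late[OF ab(2)] late[OF ab(3)] ab(1) by simp
qed

end


section \<open>Counting a prefix-complete bifix code in a Sturmian set\<close>

locale complete_bifix_code = strict_episturmian_word +
  fixes X :: "'a list set"
  assumes finite_A: "finite A" and finite_X: "finite X" and bifix: "bifix_code X"
    and X_factors: "X \<subseteq> F" and complete: "prefix_complete F X"
begin

definition P :: "'a list set" where "P = {p. \<exists>y\<in>X. strict_prefix p y}"
definition R :: "'a list set" where "R = {u. right_special F u}"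

lemma Nil_notin_X: "[] \<notin> X" using bifix unfolding bifix_code_def by simp
lemma prefix_code: "\<forall>y\<in>X. \<forall>z\<in>X. \<not> strict_prefix y z" using bifix unfolding bifix_code_def by simp
lemma suffix_code: "\<forall>y\<in>X. \<forall>z\<in>X. \<not> strict_suffix y z" using bifix unfolding bifix_code_def by simp

lemma finite_P: "finite P"
proof -
  have "P \<subseteq> (\<Union>y\<in>X. set (prefixes y))" unfolding P_def by (auto simp: strict_prefix_def)
  moreover have "finite (\<Union>y\<in>X. set (prefixes y))" using finite_X by blast
  ultimately show ?thesis by (rule finite_subset)
qed

lemma P_factors: "p \<in> P \<Longrightarrow> p \<in> F"
  unfolding P_def using X_factors factors_prefix by (blast dest: prefix_order.less_imp_le)

lemma Nil_P: "[] \<in> P"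
proof -
  obtain y where "y \<in> X" using complete Nil_factor unfolding prefix_complete_def by blast
  moreover have "y \<noteq> []" using \<open>y \<in> X\<close> Nil_notin_X by blast
  ultimately show ?thesis unfolding P_def by (auto simp: strict_prefix_def)
qed

lemma P_X_disjoint: "P \<inter> X = {}"
  unfolding P_def using prefix_code by blast

lemma no_prefix_in_iff_P:
  assumes "w \<in> F"
  shows "no_prefix_in X w \<longleftrightarrow> w \<in> P"
proof
  assume np: "no_prefix_in X w"
  then obtain y where "y \<in> X" "prefix w y" "w \<noteq> y"
    using complete assms unfolding prefix_complete_def no_prefix_in_def by blast
  then show "w \<in> P" unfolding P_def by (auto simp: strict_prefix_def)
next
  assume "w \<in> P"
  then obtain y where "y \<in> X" "strict_prefix w y" unfolding P_def by blast
  then show "no_prefix_in X w"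
    using prefix_code unfolding no_prefix_in_def by (metis prefix_order.le_less_trans)
qed

lemma child_of_P: "p \<in> P \<Longrightarrow> p @ [a] \<in> F \<Longrightarrow> p @ [a] \<in> P \<union> X"
  using no_prefix_in_iff_P[of "p @ [a]"] no_prefix_in_iff_P[OF P_factors, of p]
  unfolding no_prefix_in_def by (auto simp: prefix_snoc)

lemma prefix_tree: "P \<union> X = insert [] (\<Union>p\<in>P. (\<lambda>a. p @ [a]) ` {a. p @ [a] \<in> F})"
proof (intro equalityI subsetI)
  fix z assume z: "z \<in> P \<union> X"
  show "z \<in> insert [] (\<Union>p\<in>P. (\<lambda>a. p @ [a]) ` {a. p @ [a] \<in> F})"
  proof (cases z rule: rev_cases)
    case (snoc p a)
    have "\<exists>y\<in>X. prefix z y"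
    proof (cases "z \<in> X")
      case False then show ?thesis using z unfolding P_def by (auto simp: strict_prefix_def)
    qed (use prefix_order.refl in blast)
    then obtain y where y: "y \<in> X" "prefix (p @ [a]) y" using snoc by blast
    then have "p \<in> P" unfolding P_def using prefix_snocD[OF y(2)] by blast
    moreover have "z \<in> F" using z P_factors X_factors by blast
    ultimately show ?thesis using snoc by blast
  qed simp
qed (use Nil_P child_of_P in blast)

lemma card_children:
  assumes "p \<in> P"
  shows "card {a. p @ [a] \<in> F} = (if p \<in> R then card A else 1)"
proof (cases "p \<in> R")
  case True
  then have "{a. p @ [a] \<in> F} = A" unfolding R_def using right_special_ext ext_letter by blast
  then show ?thesis using True by simp
next
  case False
  obtain a where a: "p @ [a] \<in> F" using factors_extend P_factors[OF assms] by blast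
  have "\<not> right_special F p" using False unfolding R_def by simp
  then have "b = a" if "p @ [b] \<in> F" for b
    using not_right_special_unique_ext[OF P_factors[OF assms] _ that a] by blast
  then have "{a. p @ [a] \<in> F} = {a}" using a by blast
  then show ?thesis using False by simp
qed

text \<open>Counting the tree: card P + card X = 1 + k card (P \<inter> R) + card (P - R).\<close>

lemma card_X: "card X = (card A - 1) * card (P \<inter> R) + 1"
proof -
  let ?C = "\<lambda>p. (\<lambda>a. p @ [a]) ` {a. p @ [a] \<in> F}"
  have "{a. p @ [a] \<in> F} \<subseteq> A" for p using ext_letter by blast
  then have finite_children: "finite {a. p @ [a] \<in> F}" for p using finite_A by (rule finite_subset)
  have "card P + card X = card (P \<union> X)"
    using finite_P finite_X P_X_disjoint by (simp add: card_Un_disjoint)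
  also have "\<dots> = Suc (card (\<Union>p\<in>P. ?C p))"
    unfolding prefix_tree using finite_P finite_children by (subst card_insert_disjoint) auto
  also have "card (\<Union>p\<in>P. ?C p) = (\<Sum>p\<in>P. card (?C p))"
    using finite_P finite_children by (intro card_UN_disjoint) auto
  also have "(\<Sum>p\<in>P. card (?C p)) = (\<Sum>p\<in>P. if p \<in> R then card A else 1)"
    by (rule sum.cong) (auto simp: card_image inj_on_def card_children)
  also have "\<dots> = card A * card (P \<inter> R) + card (P - R)"
    using finite_P by (simp add: sum.If_cases Diff_eq Int_def)
  finally have "card P + card X = Suc (card A * card (P \<inter> R) + card (P - R))" .
  moreover have "card P = card (P \<inter> R) + card (P - R)" using finite_P by (rule card_Int_Diff)
  ultimately have "card X + card (P \<inter> R) = card A * card (P \<inter> R) + 1" by simp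
  moreover have "card A \<noteq> 0" using finite_A letters by (auto simp: card_eq_0_iff)
  then have "card A * card (P \<inter> R) = (card A - 1) * card (P \<inter> R) + card (P \<inter> R)"
    by (cases "card A") auto
  ultimately show ?thesis by simp
qed

lemma delta_suffixes_in_P:
  assumes "w \<in> F"
  shows "delta X w = card {u. suffix u w \<and> u \<in> P}"
proof -
  have "delta X w = card {u. suffix u w \<and> no_prefix_in X u}"
    unfolding delta_def using card_parses_suffix_code[OF Nil_notin_X suffix_code] .
  also have "{u. suffix u w \<and> no_prefix_in X u} = {u. suffix u w \<and> u \<in> P}"
    using no_prefix_in_iff_P factors_suffix assms by blast
  finally show ?thesis .
qed

text \<open>delta X is monotone under right extension, as it counts prefixes (X is a prefix code).\<close>

lemma delta_mono: "delta X w \<le> delta X (w @ t)"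
proof -
  have "card {v. prefix v w \<and> no_suffix_in X v} \<le> card {v. prefix v (w @ t) \<and> no_suffix_in X v}"
    by (rule card_mono[OF finite_subset[of _ "set (prefixes (w @ t))"]])
       (auto intro: prefix_order.order_trans)
  then show ?thesis
    unfolding delta_def using card_parses_prefix_code[OF Nil_notin_X prefix_code] by metis
qed

text \<open>Upper bound: extend w to a right-special factor; all its suffixes are right special.\<close>

lemma delta_le: assumes "w \<in> F" shows "delta X w \<le> card (P \<inter> R)"
proof -
  obtain t where rs: "right_special F (w @ t)" using right_special_extension[OF assms] by blast
  then have "{u. suffix u (w @ t) \<and> u \<in> P} \<subseteq> P \<inter> R"
    unfolding R_def using right_special_suffix by blast
  then have "delta X (w @ t) \<le> card (P \<inter> R)"
    using delta_suffixes_in_P rs finite_P unfolding right_special_def by (metis card_mono finite_Int)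
  then show ?thesis using delta_mono le_trans by blast
qed

text \<open>A right-special factor longer than all code words has every word of P \<inter> R as a
  suffix, since right-special factors of equal length coincide.\<close>

lemma delta_attained: "\<exists>u\<in>F. delta X u = card (P \<inter> R)"
proof -
  define N where "N = Suc (Max (length ` X))"
  have long: "length y < N" if "y \<in> X" for y
    unfolding N_def using that finite_X by (simp add: le_imp_less_Suc)
  obtain u where u: "length u = N" "right_special F u" using right_special_exists by blast
  have uF: "u \<in> F" using u unfolding right_special_def by simp
  have "P \<inter> R \<subseteq> {s. suffix s u \<and> s \<in> P}"
  proof
    fix p assume p: "p \<in> P \<inter> R"
    then obtain y where y: "y \<in> X" "strict_prefix p y" unfolding P_def by blast
    then have lp: "length p < N" using long prefix_length_less less_trans by blast
    define s where "s = drop (N - length p) u"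
    have "suffix s u" unfolding s_def by (rule suffix_drop)
    moreover have "s = p"
      using right_special_unique[OF right_special_suffix[OF u(2) \<open>suffix s u\<close>]] p u(1) lp
      unfolding s_def R_def by simp
    ultimately show "p \<in> {s. suffix s u \<and> s \<in> P}" using p by blast
  qed
  then have "card (P \<inter> R) \<le> delta X u"
    using delta_suffixes_in_P[OF uF] finite_P by (simp add: card_mono)
  then show ?thesis using delta_le[OF uF] uF by (intro bexI[of _ u]) simp_all
qed

lemma degree_eq: "degree F X = enat (card (P \<inter> R))"
proof (rule antisym)
  show "degree F X \<le> enat (card (P \<inter> R))"
    unfolding degree_def by (rule SUP_least) (simp add: delta_le)
  obtain u where "u \<in> F" "delta X u = card (P \<inter> R)" using delta_attained by blast
  then show "enat (card (P \<inter> R)) \<le> degree F X"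
    unfolding degree_def by (metis SUP_upper)
qed

theorem card_eq_degree: "enat (card X) = enat (card A - 1) * degree F X + 1"
  using card_X degree_eq by (simp add: one_enat_def)

end


theorem mainTheorem12:
  fixes A :: "'a set" and k :: nat and F X :: "'a list set"
  assumes "finite A" and "card A = k"
    and "sturmian_set A F"
    and "finite X" and "F_maximal_bifix F X"
  shows "enat (card X) = enat (k - 1) * degree F X + 1"
proof -
  obtain x where "strict_episturmian A x" and F: "F = factors x"
    using assms(3) unfolding sturmian_set_def by blast
  interpret strict_episturmian_word A x by unfold_locales fact
  have code: "bifix_code X" "X \<subseteq> F" using assms(5) unfolding F_maximal_bifix_def by auto
  have "[x 0] \<in> F" unfolding F factors_iff occ_def by (intro exI[of _ 0]) simp
  then have "X \<noteq> {}" using F_maximal_bifix_nonempty[OF assms(5)] by blast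
  with assms(5) have "prefix_complete F X \<or> suffix_complete F X"
    using F_maximal_bifix_complete factor_join F by blast
  then show ?thesis
  proof
    assume "prefix_complete F X"
    then interpret complete_bifix_code A x X by unfold_locales (use assms code F in auto)
    show ?thesis using card_eq_degree F assms(2) by simp
  next
    assume "suffix_complete F X"
    then have "prefix_complete F (rev ` X)" using suffix_complete_rev rev_image F by blast
    then interpret complete_bifix_code A x "rev ` X"
      by unfold_locales (use assms bifix_code_rev code rev_closed F in auto)
    have "card (rev ` X) = card X" by (simp add: card_image inj_on_def)
    then show ?thesis using card_eq_degree degree_rev[OF rev_image] F assms(2) by simp
  qed
qed

end
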